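(* Let $A$ be a finite-vertex graph and $w$ a right-infinite path over $A$. The following are equivalent: (1) $w$ is recurrent; (2) $P_{\mathsf{Sd}}(w)$ contains an idempotent; (3) $P_{\mathsf V}(w)$ contains an idempotent for every pseudovariety of semigroupoids $\mathsf V$ containing $\mathsf N$; (4) $P_{g\mathsf{LSl}}(w)$ contains an idempotent.
   Context: Semigroupoids are graphs with associative partial multiplication $st$ defined iff the source of $s$ equals the range of $t$. Pseudovarieties of semigroupoids: classes of finite semigroupoids closed under divisors, finite direct products, finite coproducts; $\mathsf{Sd}$ is the pseudovariety of all finite semigroupoids, $\mathsf N$ that of finite nilpotent semigroups, $\mathsf{LSl}$ the pseudovariety of finite semigroups $S$ such that $eSe$ is a semilattice for every idempotent $e$, and $g\mathsf{LSl}$ the smallest pseudovariety of semigroupoids containing $\mathsf{LSl}$. $\overline{\Omega}_A\mathsf V$ is the free pro-$\mathsf V$ semigroupoid over the finite-vertex graph $A$, containing the paths over $A$ when $\mathsf V\supseteq\mathsf N$. A right-infinite path is a sequence $w=w_0w_1\cdots$ of edges with each $w[0,n)=w_0\cdots w_{n-1}$ a path; $w[m,m+n)=w_m\cdots w_{m+n-1}$, $w[0,n]=w_0\cdots w_n$. $P_{\mathsf V}(w)$ is the set of cluster points in $\overline{\Omega}_A\mathsf V$ of $(w[0,n])_{n\in\mathbb N}$. $w$ is recurrent if for every $n$ there is $m>n$ with $w[0,n)=w[m,m+n)$. *)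

theory Defs
  imports Main
begin

text \<open>Convention (as in the context): the product st is defined iff
  the source of s equals the range of t; then src (st) = src t and rng (st) = rng s.\<close>

record ('v, 'e) sgd =
  verts :: "'v set"
  edges :: "'e set"
  src   :: "'e \<Rightarrow> 'v"
  rng   :: "'e \<Rightarrow> 'v"
  mult  :: "'e \<Rightarrow> 'e \<Rightarrow> 'e"

definition is_sgd :: "('v, 'e, 'z) sgd_scheme \<Rightarrow> bool" where
  "is_sgd S \<longleftrightarrow>
     (\<forall>s\<in>edges S. src S s \<in> verts S \<and> rng S s \<in> verts S) \<and>
     (\<forall>s\<in>edges S. \<forall>t\<in>edges S. src S s = rng S t \<longrightarrow>
        mult S s t \<in> edges S \<and> src S (mult S s t) = src S t \<and> rng S (mult S s t) = rng S s) \<and>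
     (\<forall>s\<in>edges S. \<forall>t\<in>edges S. \<forall>u\<in>edges S. src S s = rng S t \<longrightarrow> src S t = rng S u \<longrightarrow>
        mult S (mult S s t) u = mult S s (mult S t u))"

definition finite_sgd :: "('v, 'e, 'z) sgd_scheme \<Rightarrow> bool" where
  "finite_sgd S \<longleftrightarrow> is_sgd S \<and> finite (verts S) \<and> finite (edges S)"

definition sgd_hom ::
  "('v1, 'e1, 'z1) sgd_scheme \<Rightarrow> ('v2, 'e2, 'z2) sgd_scheme \<Rightarrow> ('v1 \<Rightarrow> 'v2) \<Rightarrow> ('e1 \<Rightarrow> 'e2) \<Rightarrow> bool" where
  "sgd_hom S T fv fe \<longleftrightarrow>
     fv ` verts S \<subseteq> verts T \<and> fe ` edges S \<subseteq> edges T \<and>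
     (\<forall>s\<in>edges S. src T (fe s) = fv (src S s) \<and> rng T (fe s) = fv (rng S s)) \<and>
     (\<forall>s\<in>edges S. \<forall>t\<in>edges S. src S s = rng S t \<longrightarrow> fe (mult S s t) = mult T (fe s) (fe t))"

definition sgd_iso ::
  "('v1, 'e1, 'z1) sgd_scheme \<Rightarrow> ('v2, 'e2, 'z2) sgd_scheme \<Rightarrow> bool" where
  "sgd_iso S T \<longleftrightarrow> (\<exists>fv fe. sgd_hom S T fv fe \<and>
      bij_betw fv (verts S) (verts T) \<and> bij_betw fe (edges S) (edges T))"

definition sub_sgd :: "('v, 'e) sgd \<Rightarrow> ('v, 'e) sgd \<Rightarrow> bool" where
  "sub_sgd S' S \<longleftrightarrow> is_sgd S' \<and> verts S' \<subseteq> verts S \<and> edges S' \<subseteq> edges S \<and>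
     (\<forall>s\<in>edges S'. src S' s = src S s \<and> rng S' s = rng S s) \<and>
     (\<forall>s\<in>edges S'. \<forall>t\<in>edges S'. src S s = rng S t \<longrightarrow> mult S' s t = mult S s t)"

definition divides :: "('v1, 'e1) sgd \<Rightarrow> ('v2, 'e2) sgd \<Rightarrow> bool" where
  "divides T S \<longleftrightarrow> (\<exists>S' fv fe. sub_sgd S' S \<and> sgd_hom S' T fv fe \<and>
      bij_betw fv (verts S') (verts T) \<and> fe ` edges S' = edges T)"

definition prod_sgd :: "('v1, 'e1) sgd \<Rightarrow> ('v2, 'e2) sgd \<Rightarrow> ('v1 \<times> 'v2, 'e1 \<times> 'e2) sgd" where
  "prod_sgd S T = \<lparr> verts = verts S \<times> verts T, edges = edges S \<times> edges T,
     src = (\<lambda>(s, t). (src S s, src T t)), rng = (\<lambda>(s, t). (rng S s, rng T t)),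
     mult = (\<lambda>(s, t) (s', t'). (mult S s s', mult T t t')) \<rparr>"

definition coprod_sgd :: "('v1, 'e1) sgd \<Rightarrow> ('v2, 'e2) sgd \<Rightarrow> ('v1 + 'v2, 'e1 + 'e2) sgd" where
  "coprod_sgd S T = \<lparr> verts = verts S <+> verts T, edges = edges S <+> edges T,
     src = case_sum (Inl \<circ> src S) (Inr \<circ> src T), rng = case_sum (Inl \<circ> rng S) (Inr \<circ> rng T),
     mult = (\<lambda>x y. case (x, y) of (Inl s, Inl s') \<Rightarrow> Inl (mult S s s')
                              | (Inr t, Inr t') \<Rightarrow> Inr (mult T t t')
                              | _ \<Rightarrow> undefined) \<rparr>"

text \<open>Pseudovarieties of semigroupoids are represented as sets of finite semigroupoids
  on the carrier types nat (every finite semigroupoid is isomorphic to such one).\<close>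
type_synonym nsgd = "(nat, nat) sgd"

definition pseudovariety :: "nsgd set \<Rightarrow> bool" where
  "pseudovariety V \<longleftrightarrow>
     (\<forall>S\<in>V. finite_sgd S) \<and>
     (\<forall>S\<in>V. \<forall>T::nsgd. finite_sgd T \<longrightarrow> divides T S \<longrightarrow> T \<in> V) \<and>
     (\<forall>T::nsgd. finite_sgd T \<and> card (verts T) = 1 \<and> card (edges T) = 1 \<longrightarrow> T \<in> V) \<and>
     (\<forall>S\<in>V. \<forall>S'\<in>V. \<forall>T::nsgd. finite_sgd T \<longrightarrow> sgd_iso T (prod_sgd S S') \<longrightarrow> T \<in> V) \<and>
     (\<forall>T::nsgd. finite_sgd T \<and> verts T = {} \<longrightarrow> T \<in> V) \<and>
     (\<forall>S\<in>V. \<forall>S'\<in>V. \<forall>T::nsgd. finite_sgd T \<longrightarrow> sgd_iso T (coprod_sgd S S') \<longrightarrow> T \<in> V)"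

fun sprod :: "('e \<Rightarrow> 'e \<Rightarrow> 'e) \<Rightarrow> 'e list \<Rightarrow> 'e" where
  "sprod m [] = undefined"
| "sprod m [x] = x"
| "sprod m (x # y # ys) = m x (sprod m (y # ys))"

definition Sd :: "nsgd set" where
  "Sd = {S. finite_sgd S}"

definition fin_semigroup :: "nsgd \<Rightarrow> bool" where
  "fin_semigroup S \<longleftrightarrow> finite_sgd S \<and> card (verts S) = 1 \<and> edges S \<noteq> {}"

definition N_sgd :: "nsgd set" where
  "N_sgd = {S. fin_semigroup S \<and>
     (\<exists>n\<ge>1. \<exists>z. \<forall>xs. length xs = n \<and> set xs \<subseteq> edges S \<longrightarrow> sprod (mult S) xs = z)}"

definition LSl :: "nsgd set" where
  "LSl = {S. fin_semigroup S \<and>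
     (\<forall>e\<in>edges S. mult S e e = e \<longrightarrow>
        (let eSe = {mult S (mult S e s) e | s. s \<in> edges S} in
         \<forall>x\<in>eSe. \<forall>y\<in>eSe. mult S x y = mult S y x \<and> mult S x x = x))}"

definition gLSl :: "nsgd set" where
  "gLSl = \<Inter>{V. pseudovariety V \<and> LSl \<subseteq> V}"

text \<open>A graph A: vertex type 'v (finite), edge type 'e (all elements are edges),
  source map al, range map om.  Graph morphisms A -> S into members of V index the
  coordinates of the canonical embedding of the free pro-V semigroupoid into
  (vertices x vertices x product of the S).\<close>

type_synonym ('v, 'e) gidx = "nsgd \<times> ('v \<Rightarrow> nat) \<times> ('e \<Rightarrow> nat)"

definition gidx :: "('e \<Rightarrow> 'v) \<Rightarrow> ('e \<Rightarrow> 'v) \<Rightarrow> nsgd set \<Rightarrow> ('v, 'e) gidx set" where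
  "gidx al om V = {(S, fv, fe). S \<in> V \<and> (\<forall>x. fv x \<in> verts S) \<and>
      (\<forall>a. fe a \<in> edges S \<and> src S (fe a) = fv (al a) \<and> rng S (fe a) = fv (om a))}"

definition is_path :: "('e \<Rightarrow> 'v) \<Rightarrow> ('e \<Rightarrow> 'v) \<Rightarrow> 'e list \<Rightarrow> bool" where
  "is_path al om u \<longleftrightarrow> u \<noteq> [] \<and> (\<forall>i. Suc i < length u \<longrightarrow> al (u ! i) = om (u ! Suc i))"

definition inf_path :: "('e \<Rightarrow> 'v) \<Rightarrow> ('e \<Rightarrow> 'v) \<Rightarrow> (nat \<Rightarrow> 'e) \<Rightarrow> bool" where
  "inf_path al om w \<longleftrightarrow> (\<forall>i. al (w i) = om (w (Suc i)))"

definition recurrent :: "(nat \<Rightarrow> 'e) \<Rightarrow> bool" where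
  "recurrent w \<longleftrightarrow> (\<forall>n. \<exists>m>n. \<forall>i<n. w (m + i) = w i)"

text \<open>Elements of the pro-V semigroupoid: (source, range, coordinates).\<close>
type_synonym ('v, 'e) proel = "'v \<times> 'v \<times> (('v, 'e) gidx \<Rightarrow> nat)"

definition embed :: "('e \<Rightarrow> 'v) \<Rightarrow> ('e \<Rightarrow> 'v) \<Rightarrow> nsgd set \<Rightarrow> 'e list \<Rightarrow> ('v, 'e) proel" where
  "embed al om V u = (al (last u), om (hd u),
     (\<lambda>i. if i \<in> gidx al om V then (case i of (S, fv, fe) \<Rightarrow> sprod (mult S) (map fe u)) else undefined))"

text \<open>Basic open neighbourhood agreement (product topology, discrete factors).\<close>
definition agree_on :: "('v, 'e) gidx set \<Rightarrow> ('v, 'e) proel \<Rightarrow> ('v, 'e) proel \<Rightarrow> bool" where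
  "agree_on F x y \<longleftrightarrow> fst x = fst y \<and> fst (snd x) = fst (snd y) \<and>
     (\<forall>i\<in>F. snd (snd x) i = snd (snd y) i)"

text \<open>The free pro-V semigroupoid: closure of the image of the finite paths.\<close>
definition Omega :: "('e \<Rightarrow> 'v) \<Rightarrow> ('e \<Rightarrow> 'v) \<Rightarrow> nsgd set \<Rightarrow> ('v, 'e) proel set" where
  "Omega al om V = {x. (\<forall>i. i \<notin> gidx al om V \<longrightarrow> snd (snd x) i = undefined) \<and>
     (\<forall>F. finite F \<and> F \<subseteq> gidx al om V \<longrightarrow>
        (\<exists>u. is_path al om u \<and> agree_on F x (embed al om V u)))}"

definition Omega_mult :: "('e \<Rightarrow> 'v) \<Rightarrow> ('e \<Rightarrow> 'v) \<Rightarrow> nsgd set \<Rightarrow> ('v, 'e) proel \<Rightarrow> ('v, 'e) proel \<Rightarrow> ('v, 'e) proel" where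
  "Omega_mult al om V x y = (fst y, fst (snd x),
     (\<lambda>i. if i \<in> gidx al om V then (case i of (S, fv, fe) \<Rightarrow> mult S (snd (snd x) i) (snd (snd y) i))
          else undefined))"

definition Omega_idempotent :: "('e \<Rightarrow> 'v) \<Rightarrow> ('e \<Rightarrow> 'v) \<Rightarrow> nsgd set \<Rightarrow> ('v, 'e) proel \<Rightarrow> bool" where
  "Omega_idempotent al om V x \<longleftrightarrow> x \<in> Omega al om V \<and> fst x = fst (snd x) \<and>
     Omega_mult al om V x x = x"

definition PV :: "('e \<Rightarrow> 'v) \<Rightarrow> ('e \<Rightarrow> 'v) \<Rightarrow> nsgd set \<Rightarrow> (nat \<Rightarrow> 'e) \<Rightarrow> ('v, 'e) proel set" where
  "PV al om V w = {x \<in> Omega al om V.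
     \<forall>F. finite F \<and> F \<subseteq> gidx al om V \<longrightarrow>
       (\<forall>N. \<exists>n\<ge>N. agree_on F x (embed al om V (map w [0..<Suc n])))}"

end

theory Submission
  imports Defs "HOL-Analysis.Analysis" "HOL-Library.Sublist"
begin

(* If w is recurrent, returns of prefixes can be chained so that, for k < j, the prefix
   w[0, l k) reappears as the suffix of w[0, l j).  In finitely many finite semigroupoids two
   such prefixes have the same value a (pigeonhole), and then e = w[0, l j - l k) = a t satisfies
   e a = a, so e e = e a t = e.  Tychonoff's theorem for the product of all finite semigroupoids
   of V turns these idempotent prefixes into an idempotent cluster point of (w[0,n])_n.

   Conversely, suppose w[0,n) never reoccurs after position n, and let k = 2n + 1.  The
   k-profiles of words (prefix and suffix of length k, set of factors of length k) form a finite
   semigroup in LSl.  If the profile of a prefix v = w[0,N] with N >= n were idempotent, then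
   the factor of v v made of the last n + 1 and the first n letters of v would be a factor of v,
   i.e. w[0,n) would return.  So no cluster point is idempotent in a pseudovariety containing
   LSl, and since LSl <= gLSl <= Sd and N <= Sd, all four conditions say that w is recurrent. *)

section \<open>Values of factors of an infinite path\<close>

text \<open>Only meaningful for \<open>i < j\<close>: the product \<open>sprod\<close> of the empty list is \<open>undefined\<close>.\<close>
definition seg_value :: "('v, 'e, 'z) sgd_scheme \<Rightarrow> ('a \<Rightarrow> 'e) \<Rightarrow> (nat \<Rightarrow> 'a) \<Rightarrow> nat \<Rightarrow> nat \<Rightarrow> 'e" where
  "seg_value S fe w i j = sprod (sgd.mult S) (map (fe \<circ> w) [i..<j])"

lemma seg_value_single: "seg_value S fe w i (Suc i) = fe (w i)"
  by (simp add: seg_value_def)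

lemma seg_value_Cons:
  assumes "Suc i < j"
  shows "seg_value S fe w i j = sgd.mult S (fe (w i)) (seg_value S fe w (Suc i) j)"
proof -
  have "[i..<j] = i # Suc i # [Suc (Suc i)..<j]" "[Suc i..<j] = Suc i # [Suc (Suc i)..<j]"
    using assms by (simp_all add: upt_conv_Cons)
  then show ?thesis unfolding seg_value_def by simp
qed

lemma seg_value_shift:
  assumes "\<forall>i<n. w (d + i) = w i"
  shows "seg_value S fe w d (d + n) = seg_value S fe w 0 n"
proof -
  have "[d..<d + n] = map (\<lambda>i. i + d) [0..<n]"
    by (metis add.commute map_add_upt)
  then have "map (fe \<circ> w) [d..<d + n] = map (fe \<circ> w) [0..<n]"
    using assms by (simp add: add.commute)
  then show ?thesis by (simp add: seg_value_def)
qed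

locale sgd_labelled_path =
  fixes S :: "('v, 'e, 'z) sgd_scheme" and fv :: "'w \<Rightarrow> 'v" and fe :: "'a \<Rightarrow> 'e"
    and al om :: "'a \<Rightarrow> 'w" and w :: "nat \<Rightarrow> 'a"
  assumes sgd: "is_sgd S"
    and labelling: "\<And>a. fe a \<in> edges S \<and> src S (fe a) = fv (al a) \<and> rng S (fe a) = fv (om a)"
    and path: "inf_path al om w"
begin

lemma al_w_Suc: "al (w i) = om (w (Suc i))"
  using path by (simp add: inf_path_def)

lemma mult_typed:
  "s \<in> edges S \<Longrightarrow> t \<in> edges S \<Longrightarrow> src S s = rng S t \<Longrightarrow>
   sgd.mult S s t \<in> edges S \<and> src S (sgd.mult S s t) = src S t \<and> rng S (sgd.mult S s t) = rng S s"
  using sgd unfolding is_sgd_def by blast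

lemma mult_assoc:
  "s \<in> edges S \<Longrightarrow> t \<in> edges S \<Longrightarrow> u \<in> edges S \<Longrightarrow> src S s = rng S t \<Longrightarrow> src S t = rng S u \<Longrightarrow>
   sgd.mult S (sgd.mult S s t) u = sgd.mult S s (sgd.mult S t u)"
  using sgd unfolding is_sgd_def by blast

lemma seg_value_typed:
  assumes "i < j"
  shows "seg_value S fe w i j \<in> edges S \<and> src S (seg_value S fe w i j) = fv (al (w (j - 1)))
    \<and> rng S (seg_value S fe w i j) = fv (om (w i))"
proof -
  have "i \<le> j - 1" using assms by simp
  then show ?thesis
  proof (induction i rule: inc_induct)
    case base
    then show ?case using assms labelling seg_value_single[of S fe w "j - 1"] by simp
  next
    case (step i)
    then have "src S (fe (w i)) = rng S (seg_value S fe w (Suc i) j)"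
      using labelling al_w_Suc by simp
    then show ?case
      using step mult_typed labelling by (simp add: seg_value_Cons)
  qed
qed

lemma seg_value_append:
  assumes "i < j" "j < k"
  shows "seg_value S fe w i k = sgd.mult S (seg_value S fe w i j) (seg_value S fe w j k)"
proof -
  have "i \<le> j - 1" using assms by simp
  then show ?thesis
  proof (induction i rule: inc_induct)
    case base
    then show ?case using assms seg_value_single[of S fe w "j - 1"] seg_value_Cons[of "j - 1" k] by simp
  next
    case (step i)
    have "Suc i < j" using step by simp
    then have typed: "src S (fe (w i)) = rng S (seg_value S fe w (Suc i) j)"
      "src S (seg_value S fe w (Suc i) j) = rng S (seg_value S fe w j k)"
      using seg_value_typed[of "Suc i" j] seg_value_typed[of j k] assms labelling
        al_w_Suc[of i] al_w_Suc[of "j - 1"]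
      by auto
    have "seg_value S fe w i k = sgd.mult S (fe (w i)) (sgd.mult S (seg_value S fe w (Suc i) j) (seg_value S fe w j k))"
      using step assms by (simp add: seg_value_Cons)
    also have "\<dots> = sgd.mult S (seg_value S fe w i j) (seg_value S fe w j k)"
      using mult_assoc[OF _ _ _ typed] labelling seg_value_typed[of "Suc i" j] seg_value_typed[of j k] step assms
      by (simp add: seg_value_Cons)
    finally show ?case .
  qed
qed

text \<open>If \<open>w[0,p)\<close> reoccurs as the suffix of \<open>w[0,q)\<close> and both have the same value \<open>a\<close>,
  then \<open>e = w[0,q-p) = a t\<close> satisfies \<open>e a = a\<close>, hence \<open>e e = e a t = a t = e\<close>.\<close>
lemma seg_value_idempotent:
  assumes "0 < p" "2 * p < q" and return: "\<forall>i<p. w (q - p + i) = w i"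
    and same_value: "seg_value S fe w 0 q = seg_value S fe w 0 p"
  shows "sgd.mult S (seg_value S fe w 0 (q - p)) (seg_value S fe w 0 (q - p)) = seg_value S fe w 0 (q - p)"
proof -
  define a where "a = seg_value S fe w 0 p"
  define t where "t = seg_value S fe w p (q - p)"
  define e where "e = seg_value S fe w 0 (q - p)"
  have e_split: "e = sgd.mult S a t"
    unfolding e_def a_def t_def using seg_value_append assms by simp
  have "seg_value S fe w (q - p) q = a"
    using seg_value_shift[OF return] assms unfolding a_def by simp
  then have ea: "sgd.mult S e a = a"
    using seg_value_append[of 0 "q - p" q] same_value assms unfolding e_def a_def by simp
  have "w (q - p) = w 0" using return assms by (metis add_0_right)
  moreover have "Suc (q - p - 1) = q - p" "Suc (p - 1) = p" using assms by simp_all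
  ultimately have "al (w (q - p - 1)) = om (w 0)" "al (w (p - 1)) = om (w p)"
    using al_w_Suc[of "q - p - 1"] al_w_Suc[of "p - 1"] by simp_all
  then have types: "e \<in> edges S" "a \<in> edges S" "t \<in> edges S" "src S e = rng S a" "src S a = rng S t"
    using seg_value_typed[of 0 "q - p"] seg_value_typed[of 0 p] seg_value_typed[of p "q - p"] assms
    unfolding e_def a_def t_def by auto
  have "sgd.mult S e e = sgd.mult S e (sgd.mult S a t)"
    by (subst (2) e_split) (rule refl)
  also have "\<dots> = sgd.mult S (sgd.mult S e a) t"
    using mult_assoc[OF types] by simp
  also have "\<dots> = e"
    using ea e_split by simp
  finally show ?thesis unfolding e_def .
qed

end

lemma gidx_labelled_path:
  assumes "(S, fv, fe) \<in> gidx al om V" "\<forall>S\<in>V. finite_sgd S" "inf_path al om w"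
  shows "sgd_labelled_path S fv fe al om w"
  using assms by unfold_locales (auto simp: gidx_def finite_sgd_def)

section \<open>Recurrent paths\<close>

lemma recurrent_return_chain:
  assumes "recurrent w"
  obtains l :: "nat \<Rightarrow> nat" where "\<And>k. M < l k"
    and "\<And>k j. k < j \<Longrightarrow> 2 * l k < l j \<and> (\<forall>i<l k. w (l j - l k + i) = w i)"
proof -
  define r where "r = (\<lambda>n. SOME m. m > n \<and> (\<forall>i<n. w (m + i) = w i))"
  have r: "r n > n \<and> (\<forall>i<n. w (r n + i) = w i)" for n
    unfolding r_def by (rule someI_ex) (use assms in \<open>simp add: recurrent_def\<close>)
  define l where "l = (\<lambda>k. ((\<lambda>x. r x + x) ^^ k) (Suc M))"
  have l_Suc: "l (Suc k) = r (l k) + l k" for k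
    by (simp add: l_def)
  have "M < l k" for k
    by (induction k) (simp_all add: l_def)
  moreover have "2 * l k < l j \<and> (\<forall>i<l k. w (l j - l k + i) = w i)" if "k < j" for k j
    using that
  proof (induction j)
    case 0
    then show ?case by simp
  next
    case (Suc j)
    show ?case
    proof (cases "k = j")
      case True
      then show ?thesis using r[of "l k"] l_Suc[of k] by auto
    next
      case False
      then have IH: "2 * l k < l j" "\<forall>i<l k. w (l j - l k + i) = w i"
        using Suc by auto
      have "w (l (Suc j) - l k + i) = w i" if "i < l k" for i
      proof -
        define q where "q = l j - l k + i"
        have "q < l j" "w q = w i" "l (Suc j) - l k + i = r (l j) + q"
          using IH that l_Suc[of j] unfolding q_def by auto
        then show ?thesis using r[of "l j"] by simp
      qed
      then show ?thesis using IH l_Suc[of j] by simp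
    qed
  qed
  ultimately show ?thesis using that by blast
qed

text \<open>Pigeonhole on the values of the prefixes \<open>w[0, l k)\<close> of a return chain in the finitely
  many finite semigroupoids of \<open>F\<close>, followed by \<open>seg_value_idempotent\<close>.\<close>
lemma recurrent_idempotent_prefix:
  fixes al om :: "'e \<Rightarrow> 'v" and w :: "nat \<Rightarrow> 'e"
  assumes path: "inf_path al om w" and rec: "recurrent w"
    and fin_V: "\<forall>S\<in>V. finite_sgd S" and "finite F" and F: "F \<subseteq> gidx al om V"
  shows "\<exists>N\<ge>M. al (w N) = om (w 0) \<and> (\<forall>(S, fv, fe)\<in>F.
     sgd.mult S (seg_value S fe w 0 (Suc N)) (seg_value S fe w 0 (Suc N)) = seg_value S fe w 0 (Suc N))"
proof -
  obtain l :: "nat \<Rightarrow> nat" where l_gt: "\<And>k. M < l k"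
    and l_return: "\<And>k j. k < j \<Longrightarrow> 2 * l k < l j \<and> (\<forall>i<l k. w (l j - l k + i) = w i)"
    using recurrent_return_chain[OF rec, where M = M] by blast
  define vals where "vals = (\<lambda>k. \<lambda>i\<in>F. case i of (S, fv, fe) \<Rightarrow> seg_value S fe w 0 (l k))"
  have "range vals \<subseteq> (\<Pi>\<^sub>E i\<in>F. edges (fst i))"
  proof -
    have "seg_value S fe w 0 (l k) \<in> edges S" if "(S, fv, fe) \<in> F" for S fv fe k
    proof -
      interpret sgd_labelled_path S fv fe al om w
        using gidx_labelled_path that F fin_V path by blast
      show ?thesis using seg_value_typed[of 0 "l k"] l_gt[of k] by simp
    qed
    then show ?thesis unfolding vals_def by (auto simp: PiE_iff split: prod.splits)
  qed
  moreover have "finite (\<Pi>\<^sub>E i\<in>F. edges (fst i))"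
    using \<open>finite F\<close> F fin_V by (intro finite_PiE) (auto simp: gidx_def finite_sgd_def)
  ultimately have "finite (range vals)"
    by (rule finite_subset)
  then have "\<not> inj vals"
    using finite_imageD[of vals UNIV] by auto
  then obtain k j where "k \<noteq> j" "vals k = vals j"
    unfolding inj_def by blast
  then obtain k j where "k < j" and same: "vals k = vals j"
    by (metis linorder_neqE_nat)
  define N where "N = l j - l k - 1"
  have lengths: "0 < l k" "2 * l k < l j" "Suc N = l j - l k" "M \<le> N"
    using l_gt[of k] l_return[OF \<open>k < j\<close>] unfolding N_def by auto
  have return: "\<forall>i<l k. w (l j - l k + i) = w i"
    using l_return[OF \<open>k < j\<close>] by blast
  have "al (w N) = om (w 0)"
    using path return[rule_format, of 0] lengths by (simp add: inf_path_def)
  moreover have "sgd.mult S (seg_value S fe w 0 (Suc N)) (seg_value S fe w 0 (Suc N)) = seg_value S fe w 0 (Suc N)"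
    if "(S, fv, fe) \<in> F" for S fv fe
  proof -
    interpret sgd_labelled_path S fv fe al om w
      using gidx_labelled_path that F fin_V path by blast
    have "seg_value S fe w 0 (l j) = seg_value S fe w 0 (l k)"
      using fun_cong[OF same, of "(S, fv, fe)"] that unfolding vals_def by simp
    then show ?thesis
      using seg_value_idempotent[OF lengths(1,2) return] lengths(3) by simp
  qed
  ultimately show ?thesis using lengths(4) by blast
qed

lemma openin_finitely_determined:
  fixes D :: "'i \<Rightarrow> 'a set"
  assumes "finite F" "F \<subseteq> I" "Z \<subseteq> (\<Pi>\<^sub>E i\<in>I. D i)"
    and determined: "\<And>f g. f \<in> Z \<Longrightarrow> g \<in> (\<Pi>\<^sub>E i\<in>I. D i) \<Longrightarrow> (\<forall>i\<in>F. g i = f i) \<Longrightarrow> g \<in> Z"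
  shows "openin (product_topology (\<lambda>i. discrete_topology (D i)) I) Z"
proof (subst openin_subopen, intro ballI)
  fix f assume "f \<in> Z"
  define T where "T = (\<Pi>\<^sub>E i\<in>I. if i \<in> F then {f i} else D i)"
  have "openin (product_topology (\<lambda>i. discrete_topology (D i)) I) T"
    unfolding T_def openin_PiE_gen
    using \<open>f \<in> Z\<close> assms(1-3) by (intro disjI2 conjI ballI) (auto intro: finite_subset)
  moreover have "f \<in> T"
    using \<open>f \<in> Z\<close> assms(3) unfolding T_def by (auto simp: PiE_iff)
  moreover have "T \<subseteq> Z"
  proof
    fix g assume "g \<in> T"
    moreover have "f \<in> (\<Pi>\<^sub>E i\<in>I. D i)" using \<open>f \<in> Z\<close> assms(3) by blast
    ultimately have "g \<in> (\<Pi>\<^sub>E i\<in>I. D i)" "\<forall>i\<in>F. g i = f i"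
      using assms(2) unfolding T_def by (auto simp: PiE_iff split: if_splits)
    then show "g \<in> Z" using determined \<open>f \<in> Z\<close> by blast
  qed
  ultimately show "\<exists>T. openin (product_topology (\<lambda>i. discrete_topology (D i)) I) T \<and> f \<in> T \<and> T \<subseteq> Z"
    by blast
qed

lemma closedin_finitely_determined:
  fixes D :: "'i \<Rightarrow> 'a set"
  assumes "finite F" "F \<subseteq> I" "Z \<subseteq> (\<Pi>\<^sub>E i\<in>I. D i)"
    and determined: "\<And>f g. f \<in> Z \<Longrightarrow> g \<in> (\<Pi>\<^sub>E i\<in>I. D i) \<Longrightarrow> (\<forall>i\<in>F. g i = f i) \<Longrightarrow> g \<in> Z"
  shows "closedin (product_topology (\<lambda>i. discrete_topology (D i)) I) Z"
proof -
  have "openin (product_topology (\<lambda>i. discrete_topology (D i)) I) ((\<Pi>\<^sub>E i\<in>I. D i) - Z)"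
    using assms(1,2) by (rule openin_finitely_determined) (use determined in fastforce)+
  then show ?thesis using assms(3) by (simp add: closedin_def)
qed

text \<open>Tychonoff for a product of finite discrete spaces, phrased as the existence of a cluster
  point of the sequence \<open>e\<close> along the indices satisfying \<open>Q\<close>.\<close>
lemma finite_product_cluster_point:
  fixes e :: "nat \<Rightarrow> 'i \<Rightarrow> 'a" and Q :: "'i set \<Rightarrow> nat \<Rightarrow> bool"
  assumes fin: "\<And>i. i \<in> I \<Longrightarrow> finite (D i)" and e: "\<And>N. e N \<in> (\<Pi>\<^sub>E i\<in>I. D i)"
    and Q: "\<And>F M. finite F \<Longrightarrow> F \<subseteq> I \<Longrightarrow> \<exists>N\<ge>M. Q F N"
    and Q_antimono: "\<And>F F' N. F \<subseteq> F' \<Longrightarrow> Q F' N \<Longrightarrow> Q F N"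
  obtains c where "c \<in> (\<Pi>\<^sub>E i\<in>I. D i)"
    and "\<And>F M. finite F \<Longrightarrow> F \<subseteq> I \<Longrightarrow> \<exists>N\<ge>M. Q F N \<and> (\<forall>i\<in>F. c i = e N i)"
proof -
  define X where "X = product_topology (\<lambda>i. discrete_topology (D i)) I"
  define C where "C = (\<lambda>F M. {f \<in> (\<Pi>\<^sub>E i\<in>I. D i). \<exists>N\<ge>M. Q F N \<and> (\<forall>i\<in>F. f i = e N i)})"
  define \<U> where "\<U> = {C F M | F M. finite F \<and> F \<subseteq> I}"
  have "compact_space X"
    unfolding X_def by (simp add: compact_space_product_topology compact_space_discrete_topology fin)
  moreover have "closedin X U" if "U \<in> \<U>" for U
    using that unfolding \<U>_def C_def X_def
    by (auto intro!: closedin_finitely_determined)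
  moreover have "\<Inter>\<G> \<noteq> {}" if "finite \<G>" "\<G> \<subseteq> \<U>" for \<G>
  proof -
    have "\<exists>F M. finite F \<and> F \<subseteq> I \<and> (\<forall>U\<in>\<G>. C F M \<subseteq> U)"
      using that
    proof (induction \<G>)
      case empty
      then show ?case by blast
    next
      case (insert U \<G>)
      then obtain F M F' M' where "finite F" "F \<subseteq> I" "\<forall>U\<in>\<G>. C F M \<subseteq> U"
        and U: "U = C F' M'" "finite F'" "F' \<subseteq> I"
        unfolding \<U>_def by auto
      moreover have "C (F \<union> F') (max M M') \<subseteq> C F M \<inter> C F' M'"
        unfolding C_def using Q_antimono[of F "F \<union> F'"] Q_antimono[of F' "F \<union> F'"] by fastforce
      ultimately show ?case by (intro exI[of _ "F \<union> F'"] exI[of _ "max M M'"]) blast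
    qed
    then obtain F M where "finite F" "F \<subseteq> I" "\<forall>U\<in>\<G>. C F M \<subseteq> U" by blast
    moreover obtain N where "N \<ge> M" "Q F N" using Q[OF \<open>finite F\<close> \<open>F \<subseteq> I\<close>] by blast
    ultimately have "e N \<in> \<Inter>\<G>" using e unfolding C_def by blast
    then show ?thesis by blast
  qed
  ultimately have "\<Inter>\<U> \<noteq> {}" unfolding compact_space_fip by blast
  then obtain c where "c \<in> \<Inter>\<U>" by blast
  then have c_C: "c \<in> C F M" if "finite F" "F \<subseteq> I" for F M
    using that unfolding \<U>_def by blast
  show ?thesis
  proof (rule that)
    show "c \<in> (\<Pi>\<^sub>E i\<in>I. D i)"
      using c_C[of "{}" 0] unfolding C_def by blast
    show "\<exists>N\<ge>M. Q F N \<and> (\<forall>i\<in>F. c i = e N i)" if "finite F" "F \<subseteq> I" for F M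
      using c_C[OF that] unfolding C_def by blast
  qed
qed

lemma embed_prefix:
  "embed al om V (map w [0..<Suc N]) = (al (w N), om (w 0),
     (\<lambda>i. if i \<in> gidx al om V then (case i of (S, fv, fe) \<Rightarrow> seg_value S fe w 0 (Suc N)) else undefined))"
  unfolding embed_def seg_value_def by (auto simp: last_map hd_map map_map simp del: upt_Suc)

lemma is_path_prefix: "inf_path al om w \<Longrightarrow> is_path al om (map w [0..<Suc N])"
  unfolding is_path_def inf_path_def by (auto simp del: upt_Suc simp: nth_append)

lemma prefix_cluster_point_in_PV:
  assumes path: "inf_path al om w"
    and undefined: "\<And>i. i \<notin> gidx al om V \<Longrightarrow> snd (snd x) i = undefined"
    and cluster: "\<And>F M. finite F \<Longrightarrow> F \<subseteq> gidx al om V \<Longrightarrow>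
      \<exists>N\<ge>M. agree_on F x (embed al om V (map w [0..<Suc N]))"
  shows "x \<in> PV al om V w"
proof -
  have "x \<in> Omega al om V"
    unfolding Omega_def using undefined cluster[of _ 0] is_path_prefix[OF path] by blast
  then show ?thesis
    unfolding PV_def using cluster by blast
qed

lemma Omega_idempotentI:
  assumes "x \<in> Omega al om V" "fst x = fst (snd x)"
    and idem: "\<And>S fv fe. (S, fv, fe) \<in> gidx al om V \<Longrightarrow>
      sgd.mult S (snd (snd x) (S, fv, fe)) (snd (snd x) (S, fv, fe)) = snd (snd x) (S, fv, fe)"
  shows "Omega_idempotent al om V x"
proof -
  have "(\<lambda>i. if i \<in> gidx al om V then case i of (S, fv, fe) \<Rightarrow> sgd.mult S (snd (snd x) i) (snd (snd x) i)
      else undefined) = snd (snd x)"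
    using assms(1) idem unfolding Omega_def by (auto split: prod.splits)
  then have "Omega_mult al om V x x = x"
    using assms(2) unfolding Omega_mult_def by (cases x) auto
  then show ?thesis
    using assms(1,2) unfolding Omega_idempotent_def by blast
qed

lemma recurrent_imp_idempotent_cluster_point:
  fixes al om :: "'e \<Rightarrow> 'v" and w :: "nat \<Rightarrow> 'e"
  assumes path: "inf_path al om w" and rec: "recurrent w" and fin_V: "\<forall>S\<in>V. finite_sgd S"
  shows "\<exists>x\<in>PV al om V w. Omega_idempotent al om V x"
proof -
  define I where "I = gidx al om V"
  define e where "e = (\<lambda>N. snd (snd (embed al om V (map w [0..<Suc N]))))"
  define Q where "Q = (\<lambda>(F :: ('v, 'e) gidx set) N. al (w N) = om (w 0) \<and> (\<forall>(S, fv, fe)\<in>F.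
    sgd.mult S (seg_value S fe w 0 (Suc N)) (seg_value S fe w 0 (Suc N)) = seg_value S fe w 0 (Suc N)))"
  have fin_D: "finite (edges (fst i))" if "i \<in> I" for i
    using that fin_V unfolding I_def gidx_def finite_sgd_def by auto
  have e_in: "e N \<in> (\<Pi>\<^sub>E i\<in>I. edges (fst i))" for N
  proof -
    have "seg_value S fe w 0 (Suc N) \<in> edges S" if "(S, fv, fe) \<in> I" for S fv fe
    proof -
      interpret sgd_labelled_path S fv fe al om w
        using gidx_labelled_path that fin_V path unfolding I_def by blast
      show ?thesis using seg_value_typed by blast
    qed
    then show ?thesis
      unfolding e_def embed_prefix I_def by (auto simp: PiE_iff extensional_def split: prod.splits)
  qed
  have Q_ex: "\<exists>N\<ge>M. Q F N" if "finite F" "F \<subseteq> I" for F M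
    unfolding Q_def by (rule recurrent_idempotent_prefix[OF path rec fin_V that[unfolded I_def]])
  have Q_antimono: "Q F N" if "F \<subseteq> F'" "Q F' N" for F F' N
    using that unfolding Q_def by auto
  obtain c where c_in: "c \<in> (\<Pi>\<^sub>E i\<in>I. edges (fst i))"
    and cluster: "\<And>F M. finite F \<Longrightarrow> F \<subseteq> I \<Longrightarrow> \<exists>N\<ge>M. Q F N \<and> (\<forall>i\<in>F. c i = e N i)"
    using finite_product_cluster_point[where I = I and D = "\<lambda>i. edges (fst i)" and e = e and Q = Q]
      fin_D e_in Q_ex Q_antimono by blast
  define x where "x = (om (w 0), om (w 0), c)"
  have "x \<in> PV al om V w"
  proof (rule prefix_cluster_point_in_PV[OF path])
    show "snd (snd x) i = undefined" if "i \<notin> gidx al om V" for i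
      using PiE_arb[OF c_in] that unfolding x_def I_def by simp
    show "\<exists>N\<ge>M. agree_on F x (embed al om V (map w [0..<Suc N]))"
      if "finite F" "F \<subseteq> gidx al om V" for F M
      using cluster[of F M] that unfolding agree_on_def x_def e_def Q_def I_def embed_prefix by auto
  qed
  moreover have "Omega_idempotent al om V x"
  proof (rule Omega_idempotentI)
    show "x \<in> Omega al om V" "fst x = fst (snd x)"
      using \<open>x \<in> PV al om V w\<close> unfolding PV_def x_def by auto
    show "sgd.mult S (snd (snd x) (S, fv, fe)) (snd (snd x) (S, fv, fe)) = snd (snd x) (S, fv, fe)"
      if "(S, fv, fe) \<in> gidx al om V" for S fv fe
      using cluster[of "{(S, fv, fe)}" 0] that unfolding x_def e_def Q_def I_def embed_prefix by auto
  qed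
  ultimately show ?thesis by blast
qed

section \<open>Profiles of words\<close>

definition factors :: "nat \<Rightarrow> 'a list \<Rightarrow> 'a list set" where
  "factors k x = {f. length f = k \<and> sublist f x}"

definition profile :: "nat \<Rightarrow> 'a list \<Rightarrow> 'a list \<times> 'a list \<times> 'a list set" where
  "profile k x = (take k x, drop (length x - k) x, factors k x)"

fun profile_mult :: "nat \<Rightarrow> 'a list \<times> 'a list \<times> 'a list set \<Rightarrow> 'a list \<times> 'a list \<times> 'a list set
    \<Rightarrow> 'a list \<times> 'a list \<times> 'a list set" where
  "profile_mult k (p1, s1, Z1) (p2, s2, Z2) =
     (take k (p1 @ p2), drop (length (s1 @ s2) - k) (s1 @ s2), Z1 \<union> Z2 \<union> factors k (s1 @ p2))"

lemma take_append_take: "take k (x @ y) = take k (take k x @ take k y)"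
  by (simp add: take_append min_def)

lemma drop_append_drop:
  "drop (length (x @ y) - k) (x @ y) =
   drop (length (drop (length x - k) x @ drop (length y - k) y) - k) (drop (length x - k) x @ drop (length y - k) y)"
proof -
  have "rev (drop (length z - k) z) = take k (rev z)" for z :: "'a list"
    by (cases "k \<le> length z") (simp_all add: rev_drop)
  then have drop_rev: "drop (length z - k) z = rev (take k (rev z))" for z :: "'a list"
    by (metis rev_rev_ident)
  show ?thesis unfolding drop_rev by (simp add: take_append min_def)
qed

lemma suffix_drop_length: "suffix s x \<Longrightarrow> length s \<le> k \<Longrightarrow> suffix s (drop (length x - k) x)"
  by (auto simp: suffix_def)

lemma prefix_take_length: "prefix p y \<Longrightarrow> length p \<le> k \<Longrightarrow> prefix p (take k y)"
  by (auto simp: prefix_def)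

lemma factors_append:
  "factors k (x @ y) = factors k x \<union> factors k y \<union> factors k (drop (length x - k) x @ take k y)"
proof (intro equalityI subsetI)
  fix f assume "f \<in> factors k (x @ y)"
  then have "length f = k" and
    "sublist f x \<or> sublist f y \<or> (\<exists>f1 f2. f = f1 @ f2 \<and> suffix f1 x \<and> prefix f2 y)"
    unfolding factors_def sublist_append by auto
  moreover have "sublist f (drop (length x - k) x @ take k y)"
    if "length f = k" "f = f1 @ f2" "suffix f1 x" "prefix f2 y" for f1 f2
  proof -
    have "suffix f1 (drop (length x - k) x)" "prefix f2 (take k y)"
      using that by (auto intro: suffix_drop_length prefix_take_length)
    then show ?thesis unfolding sublist_append using that(2) by blast
  qed
  ultimately show "f \<in> factors k x \<union> factors k y \<union> factors k (drop (length x - k) x @ take k y)"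
    unfolding factors_def by blast
next
  have "sublist (drop (length x - k) x @ take k y) (x @ y)"
    unfolding sublist_append by (blast intro: suffix_drop take_is_prefix)
  then show "f \<in> factors k (x @ y)"
    if "f \<in> factors k x \<union> factors k y \<union> factors k (drop (length x - k) x @ take k y)" for f
    using that unfolding factors_def by (auto intro: sublist_order.order_trans)
qed

lemma profile_append: "profile k (x @ y) = profile_mult k (profile k x) (profile k y)"
  unfolding profile_def profile_mult.simps
  using take_append_take drop_append_drop factors_append by metis

definition profiles :: "nat \<Rightarrow> 'a set \<Rightarrow> ('a list \<times> 'a list \<times> 'a list set) set" where
  "profiles k B = profile k ` {x. x \<noteq> [] \<and> set x \<subseteq> B}"

lemma finite_profiles:
  assumes "finite B"
  shows "finite (profiles k B)"
proof -
  let ?L = "{xs. set xs \<subseteq> B \<and> length xs \<le> k}"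
  have "profiles k B \<subseteq> ?L \<times> ?L \<times> Pow ?L"
  proof
    fix t assume "t \<in> profiles k B"
    then obtain x where x: "t = profile k x" "set x \<subseteq> B" unfolding profiles_def by auto
    have "set (take k x) \<subseteq> B" "set (drop (length x - k) x) \<subseteq> B"
      using x(2) set_take_subset set_drop_subset by fast+
    moreover have "factors k x \<subseteq> ?L"
      using x(2) set_mono_sublist unfolding factors_def by fastforce
    ultimately show "t \<in> ?L \<times> ?L \<times> Pow ?L" unfolding x(1) profile_def by auto
  qed
  moreover have "finite (?L \<times> ?L \<times> Pow ?L)"
    using finite_lists_length_le[OF assms] by blast
  ultimately show ?thesis by (rule finite_subset)
qed

lemma profile_mult_closed: "a \<in> profiles k B \<Longrightarrow> b \<in> profiles k B \<Longrightarrow> profile_mult k a b \<in> profiles k B"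
  unfolding profiles_def by (auto simp del: profile_mult.simps simp: profile_append[symmetric])

lemma profile_mult_assoc:
  "a \<in> profiles k B \<Longrightarrow> b \<in> profiles k B \<Longrightarrow> c \<in> profiles k B \<Longrightarrow>
   profile_mult k (profile_mult k a b) c = profile_mult k a (profile_mult k b c)"
  unfolding profiles_def by (auto simp del: profile_mult.simps simp: profile_append[symmetric])

text \<open>An idempotent profile \<open>(p, s, Z)\<close> of a nonempty word has \<open>|p| = |s| = k\<close> and
  \<open>factors k (s @ p) \<subseteq> Z\<close>, so each \<open>e c e\<close> is of the form \<open>(p, s, Z \<union> W)\<close>, and these
  multiply by union.\<close>
lemma profile_mult_local_semilattice:
  assumes "k \<ge> 1" and e: "e \<in> profiles k B" and idem: "profile_mult k e e = e"
  defines "ece c \<equiv> profile_mult k (profile_mult k e c) e"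
  shows "profile_mult k (ece c1) (ece c2) = profile_mult k (ece c2) (ece c1)"
    and "profile_mult k (ece c1) (ece c1) = ece c1"
proof -
  obtain z where z: "e = profile k z" "z \<noteq> []" using e unfolding profiles_def by auto
  obtain p s Z where pse: "e = (p, s, Z)" by (cases e)
  have p: "p = take k z" and s: "s = drop (length z - k) z" using z pse by (auto simp: profile_def)
  have e3: "take k (p @ p) = p" "drop (length (s @ s) - k) (s @ s) = s" "factors k (s @ p) \<subseteq> Z"
    using idem unfolding pse by auto
  have "length p = k"
    using p z(2) \<open>k \<ge> 1\<close> arg_cong[OF e3(1), of length] by (cases z) (auto simp: min_def split: if_splits)
  moreover have "length s = k"
    using s z(2) \<open>k \<ge> 1\<close> arg_cong[OF e3(2), of length] by (cases z) (auto simp: min_def split: if_splits)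
  ultimately have ece: "\<exists>W. ece c = (p, s, Z \<union> W)" for c
    unfolding ece_def pse by (cases c) auto
  have mult_ZW: "profile_mult k (p, s, Z \<union> W1) (p, s, Z \<union> W2) = (p, s, Z \<union> W1 \<union> W2)" for W1 W2
    using e3 by auto
  obtain W1 W2 where "ece c1 = (p, s, Z \<union> W1)" "ece c2 = (p, s, Z \<union> W2)"
    using ece by blast
  then show "profile_mult k (ece c1) (ece c2) = profile_mult k (ece c2) (ece c1)"
    and "profile_mult k (ece c1) (ece c1) = ece c1"
    by (simp_all only: mult_ZW) auto
qed

lemma factors_square_return:
  assumes sub: "factors (2 * n + 1) (v @ v) \<subseteq> factors (2 * n + 1) v" and "n < length v"
  shows "\<exists>m>n. \<forall>i<n. m + i < length v \<and> v ! (m + i) = v ! i"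
proof -
  define f where "f = drop (length v - Suc n) v @ take n v"
  have "sublist f (v @ v)"
    unfolding f_def sublist_append by (blast intro: suffix_drop take_is_prefix)
  moreover have "length f = 2 * n + 1"
    using \<open>n < length v\<close> unfolding f_def by simp
  ultimately have "f \<in> factors (2 * n + 1) v"
    using sub unfolding factors_def by blast
  then obtain a b where v: "v = a @ f @ b"
    unfolding factors_def sublist_def by blast
  have "length a + Suc n + i < length v \<and> v ! (length a + Suc n + i) = v ! i" if "i < n" for i
  proof -
    have "v ! (length a + Suc n + i) = f ! (Suc n + i)"
      using that \<open>length f = 2 * n + 1\<close> unfolding v by (simp add: nth_append add.assoc)
    also have "\<dots> = v ! i"
      using that \<open>n < length v\<close> unfolding f_def by (simp add: nth_append)
    finally show ?thesis
      using that \<open>length f = 2 * n + 1\<close> unfolding v by simp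
  qed
  then show ?thesis by (intro exI[of _ "length a + Suc n"]) auto
qed

lemma idempotent_profile_return:
  assumes "profile_mult (2 * n + 1) (profile (2 * n + 1) v) (profile (2 * n + 1) v) = profile (2 * n + 1) v"
    and "n < length v"
  shows "\<exists>m>n. \<forall>i<n. m + i < length v \<and> v ! (m + i) = v ! i"
proof (rule factors_square_return[OF _ \<open>n < length v\<close>])
  have "profile (2 * n + 1) (v @ v) = profile (2 * n + 1) v"
    using assms(1) by (simp only: profile_append)
  then show "factors (2 * n + 1) (v @ v) \<subseteq> factors (2 * n + 1) v"
    unfolding profile_def by simp
qed

section \<open>Non-recurrent paths\<close>

definition semigroup_sgd :: "'a set \<Rightarrow> ('a \<Rightarrow> nat) \<Rightarrow> ('a \<Rightarrow> 'a \<Rightarrow> 'a) \<Rightarrow> nsgd" where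
  "semigroup_sgd C h M = \<lparr>verts = {0}, edges = h ` C, src = (\<lambda>_. 0), rng = (\<lambda>_. 0),
     mult = (\<lambda>a b. h (M (inv_into C h a) (inv_into C h b)))\<rparr>"

lemma semigroup_sgd_simps:
  "verts (semigroup_sgd C h M) = {0}" "edges (semigroup_sgd C h M) = h ` C"
  "src (semigroup_sgd C h M) = (\<lambda>_. 0)" "rng (semigroup_sgd C h M) = (\<lambda>_. 0)"
  by (simp_all add: semigroup_sgd_def)

lemma semigroup_sgd_mult:
  "inj_on h C \<Longrightarrow> a \<in> C \<Longrightarrow> b \<in> C \<Longrightarrow> sgd.mult (semigroup_sgd C h M) (h a) (h b) = h (M a b)"
  by (simp add: semigroup_sgd_def)

lemma is_sgd_semigroup_sgd:
  assumes inj: "inj_on h C"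
    and closed: "\<And>a b. a \<in> C \<Longrightarrow> b \<in> C \<Longrightarrow> M a b \<in> C"
    and assoc: "\<And>a b c. a \<in> C \<Longrightarrow> b \<in> C \<Longrightarrow> c \<in> C \<Longrightarrow> M (M a b) c = M a (M b c)"
  shows "is_sgd (semigroup_sgd C h M)"
  unfolding is_sgd_def
proof (intro conjI ballI impI)
  let ?T = "semigroup_sgd C h M"
  fix s t u assume "s \<in> edges ?T" "t \<in> edges ?T" "u \<in> edges ?T"
  then obtain a b c where "s = h a" "t = h b" "u = h c" "a \<in> C" "b \<in> C" "c \<in> C"
    by (auto simp: semigroup_sgd_simps)
  then show "sgd.mult ?T (sgd.mult ?T s t) u = sgd.mult ?T s (sgd.mult ?T t u)"
    using semigroup_sgd_mult[OF inj] closed assoc by simp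
next
  let ?T = "semigroup_sgd C h M"
  fix s t assume "s \<in> edges ?T" "t \<in> edges ?T"
  then obtain a b where "s = h a" "t = h b" "a \<in> C" "b \<in> C"
    by (auto simp: semigroup_sgd_simps)
  then show "sgd.mult ?T s t \<in> edges ?T"
    using semigroup_sgd_mult[OF inj] closed by (simp add: semigroup_sgd_simps)
qed (simp_all add: semigroup_sgd_simps)

lemma semigroup_sgd_in_LSl:
  assumes "finite C" "C \<noteq> {}" and inj: "inj_on h C"
    and closed: "\<And>a b. a \<in> C \<Longrightarrow> b \<in> C \<Longrightarrow> M a b \<in> C"
    and assoc: "\<And>a b c. a \<in> C \<Longrightarrow> b \<in> C \<Longrightarrow> c \<in> C \<Longrightarrow> M (M a b) c = M a (M b c)"
    and local_semilattice: "\<And>e c1 c2. e \<in> C \<Longrightarrow> c1 \<in> C \<Longrightarrow> c2 \<in> C \<Longrightarrow> M e e = e \<Longrightarrow>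
        M (M (M e c1) e) (M (M e c2) e) = M (M (M e c2) e) (M (M e c1) e) \<and>
        M (M (M e c1) e) (M (M e c1) e) = M (M e c1) e"
  shows "semigroup_sgd C h M \<in> LSl"
proof -
  let ?T = "semigroup_sgd C h M"
  have mult_h: "sgd.mult ?T (h a) (h b) = h (M a b)" if "a \<in> C" "b \<in> C" for a b
    using semigroup_sgd_mult[OF inj that] .
  have "fin_semigroup ?T"
    using is_sgd_semigroup_sgd[OF inj closed assoc] assms(1,2)
    unfolding fin_semigroup_def finite_sgd_def by (simp add: semigroup_sgd_simps)
  then show ?thesis
    unfolding LSl_def
  proof (intro CollectI conjI ballI impI)
    fix e assume "e \<in> edges ?T" and idem: "sgd.mult ?T e e = e"
    then obtain a where a: "e = h a" "a \<in> C" by (auto simp: semigroup_sgd_simps)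
    then have "M a a = a"
      using idem mult_h closed inj by (metis inj_on_def)
    then have eSe: "\<exists>c\<in>C. x = h (M (M a c) a)"
      if "x \<in> {sgd.mult ?T (sgd.mult ?T e s) e |s. s \<in> edges ?T}" for x
      using that a mult_h closed by (auto simp: semigroup_sgd_simps)
    show "let eSe = {sgd.mult ?T (sgd.mult ?T e s) e |s. s \<in> edges ?T}
       in \<forall>x\<in>eSe. \<forall>y\<in>eSe. sgd.mult ?T x y = sgd.mult ?T y x \<and> sgd.mult ?T x x = x"
      unfolding Let_def
    proof (intro ballI)
      fix x y assume "x \<in> {sgd.mult ?T (sgd.mult ?T e s) e |s. s \<in> edges ?T}"
        and "y \<in> {sgd.mult ?T (sgd.mult ?T e s) e |s. s \<in> edges ?T}"
      then obtain c1 c2 where "c1 \<in> C" "x = h (M (M a c1) a)" "c2 \<in> C" "y = h (M (M a c2) a)"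
        using eSe by meson
      then show "sgd.mult ?T x y = sgd.mult ?T y x \<and> sgd.mult ?T x x = x"
        using local_semilattice[OF a(2) _ _ \<open>M a a = a\<close>] mult_h closed a(2) by simp
    qed
  qed
qed

lemma sprod_profiles:
  assumes inj: "inj_on h (profiles k B)" and "xs \<noteq> []" "set xs \<subseteq> B"
  shows "sprod (sgd.mult (semigroup_sgd (profiles k B) h (profile_mult k))) (map (\<lambda>b. h (profile k [b])) xs)
    = h (profile k xs)"
  using assms(2,3)
proof (induction xs)
  case Nil
  then show ?case by simp
next
  case (Cons x xs)
  show ?case
  proof (cases "xs = []")
    case True
    then show ?thesis by simp
  next
    case False
    have "profile k [x] \<in> profiles k B" "profile k xs \<in> profiles k B"
      using Cons.prems False unfolding profiles_def by auto
    then show ?thesis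
      using Cons False semigroup_sgd_mult[OF inj] profile_append[of k "[x]" xs]
      by (cases xs) simp_all
  qed
qed

lemma profile_sgd_in_LSl:
  assumes "finite B" "B \<noteq> {}" "1 \<le> k" and inj: "inj_on h (profiles k B)"
  shows "semigroup_sgd (profiles k B) h (profile_mult k) \<in> LSl"
proof (rule semigroup_sgd_in_LSl[OF finite_profiles[OF \<open>finite B\<close>] _ inj])
  obtain b where "b \<in> B"
    using \<open>B \<noteq> {}\<close> by blast
  then have "profile k [b] \<in> profiles k B"
    unfolding profiles_def by auto
  then show "profiles k B \<noteq> {}"
    by blast
  show "profile_mult k a b \<in> profiles k B" if "a \<in> profiles k B" "b \<in> profiles k B" for a b
    using that by (rule profile_mult_closed)
  show "profile_mult k (profile_mult k a b) c = profile_mult k a (profile_mult k b c)"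
    if "a \<in> profiles k B" "b \<in> profiles k B" "c \<in> profiles k B" for a b c
    using that by (rule profile_mult_assoc)
  show "profile_mult k (profile_mult k (profile_mult k e c1) e) (profile_mult k (profile_mult k e c2) e) =
      profile_mult k (profile_mult k (profile_mult k e c2) e) (profile_mult k (profile_mult k e c1) e) \<and>
      profile_mult k (profile_mult k (profile_mult k e c1) e) (profile_mult k (profile_mult k e c1) e) =
      profile_mult k (profile_mult k e c1) e"
    if "e \<in> profiles k B" "profile_mult k e e = e" for e c1 c2
    using profile_mult_local_semilattice[OF \<open>1 \<le> k\<close> that] by (rule conjI)
qed

text \<open>Letters outside \<open>w[0,n)\<close> are identified (to \<open>None\<close>), so that the semigroup of
  \<open>(2n+1)\<close>-profiles is finite even if the graph has infinitely many edges.\<close>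
lemma nonrecurrent_prefix_not_idempotent_in_LSl:
  fixes w :: "nat \<Rightarrow> 'e"
  assumes no_return: "\<forall>m>n. \<exists>i<n. w (m + i) \<noteq> w i"
  obtains T fe where "T \<in> LSl" "verts T = {0}" "\<And>a. fe a \<in> edges T \<and> src T (fe a) = 0 \<and> rng T (fe a) = 0"
    and "\<And>N. n \<le> N \<Longrightarrow>
      sgd.mult T (seg_value T fe w 0 (Suc N)) (seg_value T fe w 0 (Suc N)) \<noteq> seg_value T fe w 0 (Suc N)"
proof -
  define k where "k = 2 * n + 1"
  define g where "g = (\<lambda>a. if a \<in> w ` {..<n} then Some a else None)"
  define B where "B = insert None (Some ` w ` {..<n})"
  have B: "finite B" "B \<noteq> {}" and g_B: "\<And>a. g a \<in> B"
    unfolding B_def g_def by auto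
  obtain h :: "_ \<Rightarrow> nat" where inj: "inj_on h (profiles k B)"
    using finite_imp_inj_to_nat_seg[OF finite_profiles[OF \<open>finite B\<close>]] by blast
  define T where "T = semigroup_sgd (profiles k B) h (profile_mult k)"
  define fe where "fe = (\<lambda>a. h (profile k [g a]))"
  have profile_in: "profile k x \<in> profiles k B" if "x \<noteq> []" "set x \<subseteq> B" for x
    using that unfolding profiles_def by blast
  have fe_typed: "fe a \<in> edges T \<and> src T (fe a) = 0 \<and> rng T (fe a) = 0" for a
    unfolding fe_def T_def semigroup_sgd_simps using profile_in g_B by simp
  have not_idem: "sgd.mult T (seg_value T fe w 0 (Suc N)) (seg_value T fe w 0 (Suc N)) \<noteq> seg_value T fe w 0 (Suc N)"
    if "n \<le> N" for N
  proof
    define v where "v = map (g \<circ> w) [0..<Suc N]"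
    have v_in: "profile k v \<in> profiles k B"
      unfolding v_def by (rule profile_in) (use g_B in \<open>auto simp del: upt_Suc\<close>)
    have "seg_value T fe w 0 (Suc N) = h (profile k v)"
      using sprod_profiles[OF inj, of v] g_B
      unfolding seg_value_def v_def T_def fe_def by (auto simp del: upt_Suc simp: map_map comp_def)
    moreover assume "sgd.mult T (seg_value T fe w 0 (Suc N)) (seg_value T fe w 0 (Suc N)) = seg_value T fe w 0 (Suc N)"
    ultimately have "h (profile_mult k (profile k v) (profile k v)) = h (profile k v)"
      using semigroup_sgd_mult[OF inj v_in v_in] unfolding T_def by simp
    then have "profile_mult k (profile k v) (profile k v) = profile k v"
      using inj v_in profile_mult_closed by (meson inj_on_def)
    then obtain m where "m > n" and m: "\<forall>i<n. m + i < length v \<and> v ! (m + i) = v ! i"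
      using idempotent_profile_return[of n v] \<open>n \<le> N\<close> unfolding k_def v_def by auto
    have "w (m + i) = w i" if "i < n" for i
    proof -
      have "m + i < length v" "v ! (m + i) = v ! i" "i < length v"
        using m that \<open>n \<le> N\<close> unfolding v_def by auto
      then have "g (w (m + i)) = g (w i)"
        unfolding v_def by (simp del: upt_Suc)
      then show ?thesis
        using that unfolding g_def by (auto split: if_splits)
    qed
    then show False
      using no_return \<open>m > n\<close> by blast
  qed
  have "T \<in> LSl"
    unfolding T_def using profile_sgd_in_LSl[OF B _ inj] k_def by simp
  moreover have "verts T = {0}"
    unfolding T_def by (simp add: semigroup_sgd_simps)
  ultimately show ?thesis
    by (rule that[OF _ _ fe_typed not_idem])
qed

lemma idempotent_cluster_point_imp_recurrent:
  fixes al om :: "'e \<Rightarrow> 'v" and w :: "nat \<Rightarrow> 'e"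
  assumes "LSl \<subseteq> V" and x: "x \<in> PV al om V w" "Omega_idempotent al om V x"
  shows "recurrent w"
  unfolding recurrent_def
proof (rule allI, rule ccontr)
  fix n assume "\<not> (\<exists>m>n. \<forall>i<n. w (m + i) = w i)"
  then have "\<forall>m>n. \<exists>i<n. w (m + i) \<noteq> w i" by blast
  then obtain T fe where T: "T \<in> LSl" "verts T = {0}" and fe: "\<And>a. fe a \<in> edges T \<and> src T (fe a) = 0 \<and> rng T (fe a) = 0"
    and not_idem: "\<And>N. n \<le> N \<Longrightarrow>
      sgd.mult T (seg_value T fe w 0 (Suc N)) (seg_value T fe w 0 (Suc N)) \<noteq> seg_value T fe w 0 (Suc N)"
    by (rule nonrecurrent_prefix_not_idempotent_in_LSl) iprover
  define i where "i = (T, (\<lambda>_::'v. 0::nat), fe)"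
  have i: "i \<in> gidx al om V"
    unfolding i_def gidx_def using T fe \<open>LSl \<subseteq> V\<close> by auto
  then obtain N where "n \<le> N" and "agree_on {i} x (embed al om V (map w [0..<Suc N]))"
    using x(1) unfolding PV_def by blast
  then have "snd (snd x) i = seg_value T fe w 0 (Suc N)"
    using i unfolding agree_on_def embed_prefix i_def by simp
  moreover have "snd (snd (Omega_mult al om V x x)) i = snd (snd x) i"
    using x(2) unfolding Omega_idempotent_def by simp
  then have "sgd.mult T (snd (snd x) i) (snd (snd x) i) = snd (snd x) i"
    using i unfolding Omega_mult_def i_def by simp
  ultimately show False
    using not_idem[OF \<open>n \<le> N\<close>] by simp
qed

lemma pseudovariety_Sd: "pseudovariety Sd"
  unfolding pseudovariety_def Sd_def by blast

lemma N_sgd_subset_Sd: "N_sgd \<subseteq> Sd"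
  unfolding N_sgd_def Sd_def fin_semigroup_def by blast

lemma LSl_subset_Sd: "LSl \<subseteq> Sd"
  unfolding LSl_def Sd_def fin_semigroup_def by blast

lemma LSl_subset_gLSl: "LSl \<subseteq> gLSl"
  unfolding gLSl_def by blast

lemma gLSl_subset_Sd: "gLSl \<subseteq> Sd"
  unfolding gLSl_def using pseudovariety_Sd LSl_subset_Sd by blast

lemma pseudovariety_finite: "pseudovariety V \<Longrightarrow> \<forall>S\<in>V. finite_sgd S"
  unfolding pseudovariety_def by blast

theorem mainTheorem16:
  fixes al om :: "'e \<Rightarrow> 'v::finite" and w :: "nat \<Rightarrow> 'e"
  assumes "inf_path al om w"
  shows "(recurrent w \<longleftrightarrow> (\<exists>x\<in>PV al om Sd w. Omega_idempotent al om Sd x))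
       \<and> ((\<exists>x\<in>PV al om Sd w. Omega_idempotent al om Sd x) \<longleftrightarrow>
          (\<forall>V. pseudovariety V \<and> N_sgd \<subseteq> V \<longrightarrow> (\<exists>x\<in>PV al om V w. Omega_idempotent al om V x)))
       \<and> ((\<forall>V. pseudovariety V \<and> N_sgd \<subseteq> V \<longrightarrow> (\<exists>x\<in>PV al om V w. Omega_idempotent al om V x)) \<longleftrightarrow>
          (\<exists>x\<in>PV al om gLSl w. Omega_idempotent al om gLSl x))"
proof -
  have idem_iff: "(\<exists>x\<in>PV al om V w. Omega_idempotent al om V x) \<longleftrightarrow> recurrent w"
    if "\<forall>S\<in>V. finite_sgd S" "LSl \<subseteq> V" for V
    using recurrent_imp_idempotent_cluster_point[OF assms _ that(1)]
      idempotent_cluster_point_imp_recurrent[OF that(2)] by blast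
  have Sd: "(\<exists>x\<in>PV al om Sd w. Omega_idempotent al om Sd x) \<longleftrightarrow> recurrent w"
    by (rule idem_iff[OF _ LSl_subset_Sd]) (simp add: Sd_def)
  have gLSl: "(\<exists>x\<in>PV al om gLSl w. Omega_idempotent al om gLSl x) \<longleftrightarrow> recurrent w"
    by (rule idem_iff[OF _ LSl_subset_gLSl]) (use gLSl_subset_Sd in \<open>auto simp: Sd_def\<close>)
  have all: "(\<forall>V. pseudovariety V \<and> N_sgd \<subseteq> V \<longrightarrow> (\<exists>x\<in>PV al om V w. Omega_idempotent al om V x))
      \<longleftrightarrow> recurrent w"
  proof
    assume "\<forall>V. pseudovariety V \<and> N_sgd \<subseteq> V \<longrightarrow> (\<exists>x\<in>PV al om V w. Omega_idempotent al om V x)"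
    then show "recurrent w"
      using Sd pseudovariety_Sd N_sgd_subset_Sd by blast
  next
    assume "recurrent w"
    then show "\<forall>V. pseudovariety V \<and> N_sgd \<subseteq> V \<longrightarrow> (\<exists>x\<in>PV al om V w. Omega_idempotent al om V x)"
      using recurrent_imp_idempotent_cluster_point[OF assms] pseudovariety_finite by blast
  qed
  show ?thesis
    unfolding Sd gLSl all by simp
qed

end
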